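(* Let $S$ be an inverse monoid and $(X,E(S),p)$ a (global) presheaf of geodesic metric spaces on which $S$ acts properly and coboundedly. Then $S$ is quasi-finitely generated, i.e. there is a finite subset $\mathcal M\subseteq S$ with $\mathcal M=\mathcal M^{-1}$ such that $S$ is generated as a semigroup by $\mathcal M\cup E(S)$.
   Context: An inverse monoid is a monoid $S$ (identity $1$) in which every $s$ has a unique $s^{-1}$ with $ss^{-1}s=s$, $s^{-1}ss^{-1}=s^{-1}$; $E(S)$ is its set of idempotents, a meet-semilattice with meet $ef$. Presheaf: a set $X$ with maps $p\colon X\to E(S)$ and $X\times E(S)\to X$ such that $(x\cdot e)\cdot f=x\cdot ef$, $x\cdot p(x)=x$, $p(x\cdot e)=p(x)e$; fibers $X_e=p^{-1}(e)$. A (global) presheaf of metric spaces additionally has $p$ surjective, each $X_e$ a metric space $d_e$, and $d_e(x,y)\ge d_{ef}(x\cdot f,y\cdot f)$ for $x,y\in X_e$; $d(x,y)=d_e(x,y)$ for $x,y\in X_e$ and $\infty$ across fibers. Geodesic: finite distances $D$ are realised by isometric embeddings of $[0,D]$. Action: a right action $X\times S\to X$ extending the presheaf map on $E(S)$, with $p(x\cdot s)=s^{-1}p(x)s$ and $d_e(x,y)\ge d_{s^{-1}es}(x\cdot s,y\cdot s)$ for $x,y\in X_e$. Proper: for every $y_1\in X_1$ and $R\ge0$ there is a finite $\mathcal C\subseteq S$ with $\{s: d(y_1\cdot s,y_1\cdot s^{-1}s)\le R\}\subseteq\{ce: c\in\mathcal C,e\in E(S)\}$. Cobounded: there are $x_1\in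 X_1$, $T\ge0$ such that every point of $X$ equals $y\cdot s$ for some $s\in S$ and $y$ with $d(x_1,y)\le T$. *)

theory Defs
  imports "HOL-Analysis.Analysis"
begin

text \<open>The inverse monoid S is the whole carrier of a type of class monoid_mult.\<close>

definition inverse_monoid :: "'s::monoid_mult itself \<Rightarrow> bool" where
  "inverse_monoid _ \<longleftrightarrow> (\<forall>s::'s. \<exists>!t. s * t * s = s \<and> t * s * t = t)"

definition inv_of :: "'s::monoid_mult \<Rightarrow> 's" where
  "inv_of s = (THE t. s * t * s = s \<and> t * s * t = t)"

definition idems :: "'s::monoid_mult set" where
  "idems = {e. e * e = e}"

definition fiber :: "'x set \<Rightarrow> ('x \<Rightarrow> 's) \<Rightarrow> 's \<Rightarrow> 'x set" where
  "fiber X p e = {x \<in> X. p x = e}"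

definition gdist :: "('x \<Rightarrow> 's) \<Rightarrow> ('s \<Rightarrow> 'x \<Rightarrow> 'x \<Rightarrow> real) \<Rightarrow> 'x \<Rightarrow> 'x \<Rightarrow> ereal" where
  "gdist p d x y = (if p x = p y then ereal (d (p x) x y) else \<infinity>)"

text \<open>A (global) presheaf of metric spaces (X, E(S), p); the restriction map x \<cdot> e is
  the restriction of the map act to idempotents e; d e is the metric on the fibre X_e.\<close>
definition presheaf_ms ::
  "'x set \<Rightarrow> ('x \<Rightarrow> 's::monoid_mult) \<Rightarrow> ('x \<Rightarrow> 's \<Rightarrow> 'x) \<Rightarrow> ('s \<Rightarrow> 'x \<Rightarrow> 'x \<Rightarrow> real) \<Rightarrow> bool" where
  "presheaf_ms X p act d \<longleftrightarrow>
     p ` X = idems \<and>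
     (\<forall>x\<in>X. \<forall>e\<in>idems. act x e \<in> X) \<and>
     (\<forall>x\<in>X. \<forall>e\<in>idems. \<forall>f\<in>idems. act (act x e) f = act x (e * f)) \<and>
     (\<forall>x\<in>X. act x (p x) = x) \<and>
     (\<forall>x\<in>X. \<forall>e\<in>idems. p (act x e) = p x * e) \<and>
     (\<forall>e\<in>idems. Metric_space (fiber X p e) (d e)) \<and>
     (\<forall>e\<in>idems. \<forall>f\<in>idems. \<forall>x\<in>fiber X p e. \<forall>y\<in>fiber X p e.
         d (e * f) (act x f) (act y f) \<le> d e x y)"

text \<open>Each fibre is geodesic: distances are realised by isometric embeddings of [0,D].
  (All finite distances lie within a fibre.)\<close>
definition geodesic_presheaf ::
  "'x set \<Rightarrow> ('x \<Rightarrow> 's) \<Rightarrow> ('s \<Rightarrow> 'x \<Rightarrow> 'x \<Rightarrow> real) \<Rightarrow> bool" where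
  "geodesic_presheaf X p d \<longleftrightarrow>
     (\<forall>x\<in>X. \<forall>y\<in>X. p x = p y \<longrightarrow>
        (\<exists>\<gamma>::real \<Rightarrow> 'x. \<gamma> 0 = x \<and> \<gamma> (d (p x) x y) = y \<and>
           (\<forall>t\<in>{0..d (p x) x y}. \<gamma> t \<in> X) \<and>
           (\<forall>s\<in>{0..d (p x) x y}. \<forall>t\<in>{0..d (p x) x y}.
               gdist p d (\<gamma> s) (\<gamma> t) = ereal \<bar>s - t\<bar>)))"

definition action_ms ::
  "'x set \<Rightarrow> ('x \<Rightarrow> 's::monoid_mult) \<Rightarrow> ('x \<Rightarrow> 's \<Rightarrow> 'x) \<Rightarrow> ('s \<Rightarrow> 'x \<Rightarrow> 'x \<Rightarrow> real) \<Rightarrow> bool" where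
  "action_ms X p act d \<longleftrightarrow>
     (\<forall>x\<in>X. \<forall>s. act x s \<in> X) \<and>
     (\<forall>x\<in>X. \<forall>s t. act (act x s) t = act x (s * t)) \<and>
     (\<forall>x\<in>X. \<forall>s. p (act x s) = inv_of s * p x * s) \<and>
     (\<forall>e\<in>idems. \<forall>s. \<forall>x\<in>fiber X p e. \<forall>y\<in>fiber X p e.
         d (inv_of s * e * s) (act x s) (act y s) \<le> d e x y)"

definition proper_action ::
  "'x set \<Rightarrow> ('x \<Rightarrow> 's::monoid_mult) \<Rightarrow> ('x \<Rightarrow> 's \<Rightarrow> 'x) \<Rightarrow> ('s \<Rightarrow> 'x \<Rightarrow> 'x \<Rightarrow> real) \<Rightarrow> bool" where
  "proper_action X p act d \<longleftrightarrow>
     (\<forall>y1\<in>fiber X p 1. \<forall>R::real. R \<ge> 0 \<longrightarrow>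
        (\<exists>C. finite C \<and>
           {s. gdist p d (act y1 s) (act y1 (inv_of s * s)) \<le> ereal R}
             \<subseteq> {c * e | c e. c \<in> C \<and> e \<in> idems}))"

definition cobounded_action ::
  "'x set \<Rightarrow> ('x \<Rightarrow> 's::monoid_mult) \<Rightarrow> ('x \<Rightarrow> 's \<Rightarrow> 'x) \<Rightarrow> ('s \<Rightarrow> 'x \<Rightarrow> 'x \<Rightarrow> real) \<Rightarrow> bool" where
  "cobounded_action X p act d \<longleftrightarrow>
     (\<exists>x1\<in>fiber X p 1. \<exists>T::real. T \<ge> 0 \<and>
        (\<forall>x\<in>X. \<exists>s y. y \<in> X \<and> gdist p d x1 y \<le> ereal T \<and> x = act y s))"

inductive_set sgr_gen :: "'s::monoid_mult set \<Rightarrow> 's set" for A where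
  gen: "a \<in> A \<Longrightarrow> a \<in> sgr_gen A"
| mult: "a \<in> sgr_gen A \<Longrightarrow> b \<in> sgr_gen A \<Longrightarrow> a * b \<in> sgr_gen A"

definition quasi_finitely_generated :: "'s::monoid_mult itself \<Rightarrow> bool" where
  "quasi_finitely_generated _ \<longleftrightarrow>
     (\<exists>M::'s set. finite M \<and> inv_of ` M = M \<and> sgr_gen (M \<union> idems) = UNIV)"

end

theory Submission
  imports Defs
begin

text \<open>
  Coboundedness gives a base point \<open>x1\<close> over \<open>1\<close> and a radius \<open>T\<close> such that every point is
  \<open>y\<cdot>t\<close> with \<open>y\<close> in the \<open>T\<close>-ball about \<open>x1\<close>; properness at radius \<open>2T + 1\<close> gives a finite
  \<open>C\<close>. If \<open>y\<cdot>t\<close> and \<open>y'\<cdot>t'\<close> are at distance at most \<open>1\<close>, then \<open>g = t' t\<^sup>-\<^sup>1\<close> moves \<open>x1\<close> by at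
  most \<open>2T + 1\<close>, so \<open>g \<in> C E(S)\<close>, and \<open>t' = g t\<close>. For \<open>s \<in> S\<close>, walking in unit steps along a
  geodesic from \<open>x1\<cdot>s\<^sup>-\<^sup>1s\<close> to \<open>x1\<cdot>s\<close> in the fibre over \<open>s\<^sup>-\<^sup>1s\<close> thus writes \<open>s\<close> as a product of
  elements of \<open>C \<union> E(S)\<close>; \<open>M = C \<union> C\<^sup>-\<^sup>1\<close> then works.
\<close>

lemma inv_of_regular:
  assumes "inverse_monoid TYPE('s::monoid_mult)"
  shows "(s::'s) * inv_of s * s = s" and "inv_of s * s * inv_of s = inv_of s"
proof -
  have "\<exists>!t. s * t * s = s \<and> t * s * t = t"
    using assms unfolding inverse_monoid_def by blast
  then have "s * inv_of s * s = s \<and> inv_of s * s * inv_of s = inv_of s"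
    unfolding inv_of_def by (rule theI')
  then show "s * inv_of s * s = s" "inv_of s * s * inv_of s = inv_of s" by auto
qed

lemma inv_of_unique:
  assumes "inverse_monoid TYPE('s::monoid_mult)" and "(s::'s) * t * s = s" and "t * s * t = t"
  shows "inv_of s = t"
proof -
  have "\<exists>!t. s * t * s = s \<and> t * s * t = t"
    using assms(1) unfolding inverse_monoid_def by blast
  then show ?thesis unfolding inv_of_def using assms(2,3) by (intro the1_equality) auto
qed

lemma inv_of_inv_of:
  assumes "inverse_monoid TYPE('s::monoid_mult)"
  shows "inv_of (inv_of (s::'s)) = s"
  using inv_of_regular[OF assms, of s] by (intro inv_of_unique[OF assms]) auto

lemma one_in_idems: "1 \<in> idems"
  by (simp add: idems_def)

lemma inv_of_idem:
  assumes "inverse_monoid TYPE('s::monoid_mult)" and "(e::'s) \<in> idems"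
  shows "inv_of e = e"
  using assms by (intro inv_of_unique[OF assms(1)]) (auto simp: idems_def)

lemma inv_of_mult_self_in_idems:
  assumes "inverse_monoid TYPE('s::monoid_mult)"
  shows "inv_of (s::'s) * s \<in> idems" and "s * inv_of s \<in> idems"
  using inv_of_regular[OF assms, of s] by (simp_all add: idems_def mult.assoc[symmetric])

lemma idems_mult_closed:
  assumes im: "inverse_monoid TYPE('s::monoid_mult)" and e: "(e::'s) \<in> idems" and f: "f \<in> idems"
  shows "e * f \<in> idems"
proof -
  have ee: "e * e = e" and ff: "f * f = f" using e f by (auto simp: idems_def)
  define x where "x = inv_of (e * f)"
  have reg1: "e * f * x * (e * f) = e * f" and reg2: "x * (e * f) * x = x"
    using inv_of_regular[OF im, of "e * f"] unfolding x_def by auto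
  \<comment> \<open>\<open>f x e\<close> is another inverse of \<open>e f\<close>, so it equals \<open>x\<close>, which is therefore idempotent.\<close>
  have inv1: "e * f * (f * x * e) * (e * f) = e * f"
    using reg1 by (simp add: mult.assoc ee ff flip: mult.assoc[of f f] mult.assoc[of e e])
  have "f * x * e * (e * f) * (f * x * e) = f * (x * (e * f) * x) * e"
    by (simp add: mult.assoc ee ff flip: mult.assoc[of f f] mult.assoc[of e e])
  also have "\<dots> = f * x * e"
    by (simp only: reg2)
  finally have "inv_of (e * f) = f * x * e"
    by (rule inv_of_unique[OF im inv1])
  then have fxe: "f * x * e = x"
    unfolding x_def[symmetric] by (rule sym)
  have "x * x = f * (x * (e * f) * x) * e"
    using fxe by (metis mult.assoc)
  also have "\<dots> = x"
    by (simp only: reg2 fxe)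
  finally have xx: "x \<in> idems" by (simp add: idems_def)
  have "e * f = inv_of x"
    using reg1 reg2 by (intro inv_of_unique[OF im, symmetric]) (auto simp: mult.assoc)
  then show ?thesis using inv_of_idem[OF im xx] xx by simp
qed

lemma idems_commute:
  assumes im: "inverse_monoid TYPE('s::monoid_mult)" and e: "(e::'s) \<in> idems" and f: "f \<in> idems"
  shows "e * f = f * e"
proof -
  have ee: "e * e = e" and ff: "f * f = f" using e f by (auto simp: idems_def)
  have ef: "e * f \<in> idems" and fe: "f * e \<in> idems"
    using idems_mult_closed[OF im e f] idems_mult_closed[OF im f e] .
  \<comment> \<open>\<open>f e\<close> is an inverse of the idempotent \<open>e f\<close>, which is its own inverse.\<close>
  have "e * f * (f * e) * (e * f) = (e * f) * (e * f)"
    by (simp add: mult.assoc ee ff flip: mult.assoc[of f f] mult.assoc[of e e])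
  moreover have "f * e * (e * f) * (f * e) = (f * e) * (f * e)"
    by (simp add: mult.assoc ee ff flip: mult.assoc[of f f] mult.assoc[of e e])
  ultimately have "inv_of (e * f) = f * e"
    using ef fe by (intro inv_of_unique[OF im]) (simp_all add: idems_def)
  then show ?thesis using inv_of_idem[OF im ef] by simp
qed

lemma inv_of_mult:
  assumes im: "inverse_monoid TYPE('s::monoid_mult)"
  shows "inv_of ((a::'s) * b) = inv_of b * inv_of a"
proof (rule inv_of_unique[OF im])
  have comm: "(b * inv_of b) * (inv_of a * a) = (inv_of a * a) * (b * inv_of b)"
    using idems_commute[OF im] inv_of_mult_self_in_idems[OF im] by blast
  note a = inv_of_regular[OF im, of a] and b = inv_of_regular[OF im, of b]
  have "a * b * (inv_of b * inv_of a) * (a * b) = a * ((b * inv_of b) * (inv_of a * a)) * b"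
    by (simp add: mult.assoc)
  also have "\<dots> = a * ((inv_of a * a) * (b * inv_of b)) * b"
    by (simp only: comm)
  also have "\<dots> = (a * inv_of a * a) * (b * inv_of b * b)"
    by (simp add: mult.assoc)
  finally show "a * b * (inv_of b * inv_of a) * (a * b) = a * b"
    using a b by simp
  have "inv_of b * inv_of a * (a * b) * (inv_of b * inv_of a)
      = inv_of b * ((inv_of a * a) * (b * inv_of b)) * inv_of a"
    by (simp add: mult.assoc)
  also have "\<dots> = inv_of b * ((b * inv_of b) * (inv_of a * a)) * inv_of a"
    by (simp only: comm)
  also have "\<dots> = (inv_of b * b * inv_of b) * (inv_of a * a * inv_of a)"
    by (simp add: mult.assoc)
  finally show "inv_of b * inv_of a * (a * b) * (inv_of b * inv_of a) = inv_of b * inv_of a"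
    using a b by simp
qed

lemma factor_through_equal_domains:
  assumes im: "inverse_monoid TYPE('s::monoid_mult)" and dom: "inv_of t' * t' = inv_of (t::'s) * t"
  shows "t' = (t' * inv_of t) * t"
    and "inv_of (t' * inv_of t) * (t' * inv_of t) = t * inv_of t"
proof -
  have "(t' * inv_of t) * t = t' * (inv_of t' * t')"
    by (simp add: dom mult.assoc)
  then show "t' = (t' * inv_of t) * t"
    using inv_of_regular(1)[OF im, of t'] by (simp add: mult.assoc)
  have "inv_of (t' * inv_of t) * (t' * inv_of t) = (t * inv_of t * t) * inv_of t"
    by (simp add: inv_of_mult[OF im] inv_of_inv_of[OF im] mult.assoc flip: dom)
  then show "inv_of (t' * inv_of t) * (t' * inv_of t) = t * inv_of t"
    by (simp only: inv_of_regular(1)[OF im])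
qed

lemma sgr_gen_mono:
  assumes "A \<subseteq> B"
  shows "sgr_gen A \<subseteq> sgr_gen B"
proof
  fix x assume "x \<in> sgr_gen A"
  then show "x \<in> sgr_gen B"
    by induction (use assms in \<open>auto intro: sgr_gen.intros\<close>)
qed

lemma quasi_finitely_generatedI:
  assumes im: "inverse_monoid TYPE('s::monoid_mult)"
    and "finite C" and gen: "sgr_gen (C \<union> idems) = (UNIV :: 's set)"
  shows "quasi_finitely_generated TYPE('s)"
proof -
  let ?M = "C \<union> inv_of ` C"
  have "C \<union> idems \<subseteq> ?M \<union> idems" by blast
  then have "sgr_gen (?M \<union> idems) = UNIV"
    using sgr_gen_mono gen by (metis top.extremum_uniqueI)
  moreover have "inv_of ` ?M = ?M"
    by (simp add: image_Un image_image inv_of_inv_of[OF im] Un_commute)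
  ultimately show ?thesis
    unfolding quasi_finitely_generated_def using \<open>finite C\<close> by (intro exI[of _ ?M]) simp
qed

lemma gdist_eq_ereal_iff: "gdist p d x y = ereal r \<longleftrightarrow> p x = p y \<and> d (p x) x y = r"
  by (simp add: gdist_def)

lemma gdist_le_ereal_iff: "gdist p d x y \<le> ereal r \<longleftrightarrow> p x = p y \<and> d (p x) x y \<le> r"
  by (simp add: gdist_def)

lemma geodesic_presheaf_unit_step:
  assumes geo: "geodesic_presheaf X p d" and x: "x \<in> X" and z: "z \<in> X" "p z = p x"
    and far: "1 \<le> d (p x) x z"
  shows "\<exists>w\<in>X. p w = p x \<and> d (p x) x w = d (p x) x z - 1 \<and> d (p x) w z = 1"
proof -
  define D where "D = d (p x) x z"
  obtain \<gamma> :: "real \<Rightarrow> 'a" where \<gamma>0: "\<gamma> 0 = x" and \<gamma>D: "\<gamma> D = z"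
    and \<gamma>X: "\<forall>t\<in>{0..D}. \<gamma> t \<in> X"
    and \<gamma>: "\<forall>a\<in>{0..D}. \<forall>b\<in>{0..D}. gdist p d (\<gamma> a) (\<gamma> b) = ereal \<bar>a - b\<bar>"
    using geo x z unfolding geodesic_presheaf_def D_def by (metis (no_types, lifting))
  have I: "0 \<in> {0..D}" "D - 1 \<in> {0..D}" "D \<in> {0..D}"
    using far by (auto simp: D_def)
  have "\<gamma> (D - 1) \<in> X"
    using \<gamma>X I by blast
  moreover have "gdist p d x (\<gamma> (D - 1)) = ereal (D - 1)"
    using \<gamma>[rule_format, OF I(1,2)] \<gamma>0 far by (simp add: D_def)
  moreover have "gdist p d (\<gamma> (D - 1)) z = ereal 1"
    using \<gamma>[rule_format, OF I(2,3)] \<gamma>D by simp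
  ultimately show ?thesis
    unfolding gdist_eq_ereal_iff D_def by auto
qed

lemma geodesic_presheaf_fibre_induct:
  assumes geo: "geodesic_presheaf X p d" and a: "a \<in> X" and base: "P a"
    and step: "\<And>w z. w \<in> X \<Longrightarrow> z \<in> X \<Longrightarrow> p w = p a \<Longrightarrow> p z = p a \<Longrightarrow>
                 d (p a) w z \<le> 1 \<Longrightarrow> P w \<Longrightarrow> P z"
    and z: "z \<in> X" "p z = p a"
  shows "P z"
proof -
  have "\<forall>z\<in>X. p z = p a \<longrightarrow> d (p a) a z \<le> real n \<longrightarrow> P z" for n
  proof (induction n)
    case 0
    then show ?case using step[OF a _ refl] base by fastforce
  next
    case (Suc n)
    show ?case
    proof (intro ballI impI)
      fix z assume z: "z \<in> X" "p z = p a" and dist: "d (p a) a z \<le> real (Suc n)"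
      show "P z"
      proof (cases "d (p a) a z \<le> 1")
        case True
        then show ?thesis using step[OF a z(1) refl z(2)] base by blast
      next
        case False
        then obtain w where "w \<in> X" "p w = p a" "d (p a) a w = d (p a) a z - 1"
          and "d (p a) w z = 1"
          using geodesic_presheaf_unit_step[OF geo a z] by auto
        moreover from this have "P w" using Suc.IH dist by auto
        ultimately show ?thesis using step z by auto
      qed
    qed
  qed
  moreover have "d (p a) a z \<le> real (nat \<lceil>d (p a) a z\<rceil>)" by linarith
  ultimately show ?thesis using z by blast
qed

locale inverse_monoid_action =
  fixes X :: "'x set" and p :: "'x \<Rightarrow> 's::monoid_mult" and act :: "'x \<Rightarrow> 's \<Rightarrow> 'x"
    and d :: "'s \<Rightarrow> 'x \<Rightarrow> 'x \<Rightarrow> real"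
  assumes inverse_monoid: "inverse_monoid TYPE('s)"
    and presheaf: "presheaf_ms X p act d"
    and action: "action_ms X p act d"
begin

lemma act_closed: "x \<in> X \<Longrightarrow> act x s \<in> X"
  using action unfolding action_ms_def by blast

lemma act_act: "x \<in> X \<Longrightarrow> act (act x s) u = act x (s * u)"
  using action unfolding action_ms_def by blast

lemma p_act: "x \<in> X \<Longrightarrow> p (act x s) = inv_of s * p x * s"
  using action unfolding action_ms_def by blast

lemma act_nonexpanding:
  "e \<in> idems \<Longrightarrow> x \<in> fiber X p e \<Longrightarrow> y \<in> fiber X p e \<Longrightarrow>
     d (inv_of s * e * s) (act x s) (act y s) \<le> d e x y"
  using action unfolding action_ms_def by blast

lemma fibre_metric: "e \<in> idems \<Longrightarrow> Metric_space (fiber X p e) (d e)"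
  using presheaf unfolding presheaf_ms_def by blast

lemma act_fibre_one: "x \<in> fiber X p 1 \<Longrightarrow> act x s \<in> fiber X p (inv_of s * s)"
  using act_closed p_act by (simp add: fiber_def)

lemma displacement_bound:
  assumes x1: "x1 \<in> fiber X p 1" and y: "y \<in> fiber X p 1" and y': "y' \<in> fiber X p 1"
    and dy: "d 1 x1 y \<le> T" and dy': "d 1 x1 y' \<le> T"
    and same: "p (act y t) = p (act y' t')" and close: "d (p (act y t)) (act y t) (act y' t') \<le> R"
  shows "gdist p d (act x1 (t' * inv_of t)) (act x1 (inv_of (t' * inv_of t) * (t' * inv_of t)))
           \<le> ereal (2 * T + R)"
proof -
  note im = inverse_monoid
  define g where "g = t' * inv_of t"
  define e0 where "e0 = t * inv_of t"
  define f where "f = inv_of t * t"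
  have e0: "e0 \<in> idems" and f: "f \<in> idems"
    using inv_of_mult_self_in_idems[OF im] by (auto simp: e0_def f_def)
  have "p (act y t) = f" "p (act y' t') = inv_of t' * t'"
    using y y' p_act by (auto simp: fiber_def f_def)
  then have w: "act y t \<in> fiber X p f" and z: "act y' t' \<in> fiber X p f"
    and dom: "inv_of t' * t' = inv_of t * t"
    using same y y' act_closed by (auto simp: fiber_def f_def)
  have gg: "inv_of g * g = e0"
    using factor_through_equal_domains(2)[OF im dom] by (simp add: g_def e0_def)
  have e0e0: "inv_of e0 * e0 = e0"
    using inv_of_idem[OF im e0] e0 by (simp add: idems_def)
  have fe0: "inv_of (inv_of t) * f * inv_of t = e0"
    using inv_of_regular(1)[OF im, of t] by (simp add: inv_of_inv_of[OF im] f_def e0_def mult.assoc)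
  \<comment> \<open>Triangle inequality along \<open>x1\<cdot>g, y'\<cdot>g, y\<cdot>e0, x1\<cdot>e0\<close> in the fibre over \<open>e0\<close>.\<close>
  have "d e0 (act x1 g) (act y' g) \<le> T"
    using act_nonexpanding[OF one_in_idems x1 y', of g] gg dy' by simp
  moreover have "d e0 (act y' g) (act y e0) \<le> R"
  proof -
    have "act y' g = act (act y' t') (inv_of t)" "act y e0 = act (act y t) (inv_of t)"
      using y y' act_act by (auto simp: fiber_def g_def e0_def)
    moreover have "d f (act y' t') (act y t) \<le> R"
      using Metric_space.commute[OF fibre_metric[OF f]] close w by (simp add: fiber_def)
    ultimately show ?thesis
      using act_nonexpanding[OF f z w, of "inv_of t"] fe0 by simp
  qed
  moreover have "d e0 (act y e0) (act x1 e0) \<le> T"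
    using act_nonexpanding[OF one_in_idems y x1, of e0] e0e0 dy
      Metric_space.commute[OF fibre_metric[OF one_in_idems]] by simp
  moreover have "act x1 g \<in> fiber X p e0" "act y' g \<in> fiber X p e0"
    "act y e0 \<in> fiber X p e0" "act x1 e0 \<in> fiber X p e0"
    using act_fibre_one[OF x1, of g] act_fibre_one[OF y', of g] act_fibre_one[OF y, of e0]
      act_fibre_one[OF x1, of e0] gg e0e0 by simp_all
  ultimately have "d e0 (act x1 g) (act x1 e0) \<le> 2 * T + R"
    using Metric_space.triangle[OF fibre_metric[OF e0]] by (smt (verit))
  then show ?thesis
    using act_fibre_one[OF x1, of g] act_fibre_one[OF x1, of e0] gg e0e0
    by (simp add: gdist_le_ereal_iff fiber_def g_def)
qed

lemma generated_if_close_to_generated: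
  assumes x1: "x1 \<in> fiber X p 1" and y: "y \<in> fiber X p 1" and y': "y' \<in> fiber X p 1"
    and dy: "d 1 x1 y \<le> T" and dy': "d 1 x1 y' \<le> T"
    and proper: "{s. gdist p d (act x1 s) (act x1 (inv_of s * s)) \<le> ereal (2 * T + 1)}
                   \<subseteq> {c * e | c e. c \<in> C \<and> e \<in> idems}"
    and same: "p (act y t) = p (act y' t')" and close: "d (p (act y t)) (act y t) (act y' t') \<le> 1"
    and t: "t \<in> sgr_gen (C \<union> idems)"
  shows "t' \<in> sgr_gen (C \<union> idems)"
proof -
  have "inv_of t' * t' = inv_of t * t"
    using same y y' p_act by (auto simp: fiber_def)
  then have t': "t' = (t' * inv_of t) * t"
    using factor_through_equal_domains(1)[OF inverse_monoid] by blast
  obtain c e where "t' * inv_of t = c * e" "c \<in> C" "e \<in> idems"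
    using displacement_bound[OF x1 y y' dy dy' same close] proper by blast
  with t' t show ?thesis
    by (metis UnCI sgr_gen.gen sgr_gen.mult)
qed

lemma generated_if_geodesic_cobounded:
  assumes geo: "geodesic_presheaf X p d" and x1: "x1 \<in> fiber X p 1" and "0 \<le> T"
    and rep: "\<And>x. x \<in> X \<Longrightarrow> \<exists>y t. y \<in> fiber X p 1 \<and> d 1 x1 y \<le> T \<and> x = act y t"
    and proper: "{s. gdist p d (act x1 s) (act x1 (inv_of s * s)) \<le> ereal (2 * T + 1)}
                   \<subseteq> {c * e | c e. c \<in> C \<and> e \<in> idems}"
  shows "sgr_gen (C \<union> idems) = UNIV"
proof -
  let ?G = "sgr_gen (C \<union> idems)"
  let ?P = "\<lambda>z. \<forall>y t. y \<in> fiber X p 1 \<longrightarrow> d 1 x1 y \<le> T \<longrightarrow> z = act y t \<longrightarrow> t \<in> ?G"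
  have step: "?P z" if "p w = p z" "d (p w) w z \<le> 1" "w \<in> X" "?P w" for w z
  proof (intro allI impI)
    fix y' t' assume y': "y' \<in> fiber X p 1" "d 1 x1 y' \<le> T" "z = act y' t'"
    obtain y t where "y \<in> fiber X p 1" "d 1 x1 y \<le> T" "w = act y t"
      using rep[OF \<open>w \<in> X\<close>] by blast
    with that y' show "t' \<in> ?G"
      using generated_if_close_to_generated[OF x1 _ y'(1) _ y'(2) proper] by blast
  qed
  have "s \<in> ?G" for s
  proof -
    let ?f = "inv_of s * s"
    have f: "?f \<in> idems"
      using inv_of_mult_self_in_idems(1)[OF inverse_monoid] .
    then have x0: "act x1 ?f \<in> fiber X p ?f"
      using act_fibre_one[OF x1, of ?f] inv_of_idem[OF inverse_monoid f] by (simp add: idems_def)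
    have "d 1 x1 x1 \<le> T"
      using Metric_space.zero[OF fibre_metric[OF one_in_idems] x1 x1] \<open>0 \<le> T\<close> by simp
    have base: "?P (act x1 ?f)"
    proof (intro allI impI)
      fix y t assume y: "y \<in> fiber X p 1" "d 1 x1 y \<le> T" and eq: "act x1 ?f = act y t"
      have "d ?f (act x1 ?f) (act x1 ?f) = 0"
        using Metric_space.zero[OF fibre_metric[OF f] x0 x0] by simp
      then have "p (act x1 ?f) = p (act y t)" "d (p (act x1 ?f)) (act x1 ?f) (act y t) \<le> 1"
        using x0 unfolding eq[symmetric] by (simp_all add: fiber_def)
      moreover have "?f \<in> ?G"
        using f by (blast intro: sgr_gen.gen)
      ultimately show "t \<in> ?G"
        using generated_if_close_to_generated[OF x1 x1 y(1) \<open>d 1 x1 x1 \<le> T\<close> y(2) proper] by blast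
    qed
    have "?P (act x1 s)"
    proof (rule geodesic_presheaf_fibre_induct[OF geo, where a = "act x1 ?f" and P = ?P])
      show "?P (act x1 ?f)" by (rule base)
      show "act x1 ?f \<in> X" "act x1 s \<in> X" "p (act x1 s) = p (act x1 ?f)"
        using x0 act_fibre_one[OF x1, of s] by (auto simp: fiber_def)
      show "?P z" if "w \<in> X" "p w = p (act x1 ?f)" "p z = p (act x1 ?f)"
        and "d (p (act x1 ?f)) w z \<le> 1" and "?P w" for w z
        using step[of w z] that by simp
    qed
    then show "s \<in> ?G"
      using x1 \<open>d 1 x1 x1 \<le> T\<close> by blast
  qed
  then show ?thesis by blast
qed

end

theorem corollary3p7:
  fixes X :: "'x set" and p :: "'x \<Rightarrow> 's::monoid_mult"
    and act :: "'x \<Rightarrow> 's \<Rightarrow> 'x" and d :: "'s \<Rightarrow> 'x \<Rightarrow> 'x \<Rightarrow> real"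
  assumes "inverse_monoid TYPE('s)"
    and "presheaf_ms X p act d"
    and "geodesic_presheaf X p d"
    and "action_ms X p act d"
    and "proper_action X p act d"
    and "cobounded_action X p act d"
  shows "quasi_finitely_generated TYPE('s)"
proof -
  interpret inverse_monoid_action X p act d
    using assms(1,2,4) by unfold_locales
  obtain x1 T where x1: "x1 \<in> fiber X p 1" and "0 \<le> T"
    and cob: "\<forall>x\<in>X. \<exists>s y. y \<in> X \<and> gdist p d x1 y \<le> ereal T \<and> x = act y s"
    using assms(6) unfolding cobounded_action_def by blast
  have rep: "\<exists>y t. y \<in> fiber X p 1 \<and> d 1 x1 y \<le> T \<and> x = act y t" if "x \<in> X" for x
    using cob that x1 by (fastforce simp: gdist_le_ereal_iff fiber_def)
  obtain C where "finite C" and proper: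
    "{s. gdist p d (act x1 s) (act x1 (inv_of s * s)) \<le> ereal (2 * T + 1)}
       \<subseteq> {c * e | c e. c \<in> C \<and> e \<in> idems}"
  proof -
    have "0 \<le> 2 * T + 1" using \<open>0 \<le> T\<close> by simp
    then show ?thesis using that assms(5) x1 unfolding proper_action_def by blast
  qed
  have "sgr_gen (C \<union> idems) = UNIV"
    using generated_if_geodesic_cobounded[OF assms(3) x1 \<open>0 \<le> T\<close> rep proper] .
  then show ?thesis
    using quasi_finitely_generatedI[OF assms(1) \<open>finite C\<close>] by blast
qed

end
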